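(* Let $W(z)=\dfrac{\arctan\sqrt{2e^{-z}-1}}{\sqrt{2e^{-z}-1}}$, with principal branches of $\arctan$ and the square root. For $|z|<\ln2$, \[ W(z)=\sum_{n=0}^{\infty}(-1)^n\Bigg[\frac{\pi}{4}\sum_{k=0}^{n}(-1)^kS(n,k)(2k-1)!!+\sum_{k=1}^{n}(-1)^kS(n,k)\frac{k!}{2^k}\sum_{\ell=1}^{k}(-1)^{\ell}\binom{2k-\ell}{k}\frac{2^{\ell/2}}{\ell}\sin\frac{3\ell\pi}{4}\Bigg]\frac{z^n}{n!}. \]
   Context: $S(n,k)$ are the Stirling numbers of the second kind, given by $\frac{(e^x-1)^k}{k!}=\sum_{n\ge k}S(n,k)\frac{x^n}{n!}$. Double factorials: $(2k-1)!!=1\cdot3\cdots(2k-1)$ for $k\ge1$, and $(-1)!!=1$. An empty sum is $0$. *)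

theory Defs
  imports "HOL-Analysis.Analysis" "HOL-Combinatorics.Stirling"
begin

text \<open>Odd double factorial: oddfact k = (2k-1)!! = 1*3*...*(2k-1), with oddfact 0 = (-1)!! = 1.\<close>
definition oddfact :: "nat \<Rightarrow> nat" where
  "oddfact k = (\<Prod>i=1..k. 2*i - 1)"

definition W :: "complex \<Rightarrow> complex" where
  "W z = Arctan (csqrt (2 * exp (-z) - 1)) / csqrt (2 * exp (-z) - 1)"

definition Wcoeff :: "nat \<Rightarrow> real" where
  "Wcoeff n = (-1)^n *
     (pi/4 * (\<Sum>k=0..n. (-1)^k * real (Stirling n k) * real (oddfact k))
      + (\<Sum>k=1..n. (-1)^k * real (Stirling n k) * (fact k / 2^k) *
          (\<Sum>l=1..k. (-1)^l * real ((2*k - l) choose k) * (2 powr (real l / 2) / real l)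
                        * sin (3 * real l * pi / 4))))"

end

theory Submission
  imports Defs "HOL-Complex_Analysis.Complex_Analysis"
begin

text \<open>
  W(z) = g(e^(-z)) with g(x) = arctan(sqrt(2x-1))/sqrt(2x-1), which is holomorphic off the
  half-line x <= 1/2. For |z| < ln 2 the point e^(-z) stays off that half-line, so the series
  is the Taylor series of W at 0, whose n-th coefficient is (-1)^n sum_k S(n,k) g^(k)(1) by the
  Faa di Bruno formula for composition with exp. From 2x((2x-1)g' + g) = 1 one gets, by
  differentiating k times and evaluating at 1, that b_k = (-1)^k g^(k)(1) satisfies b_0 = pi/4
  and b_(k+1) = (2k+1) b_k - k!/2. The bracket of the statement satisfies the same recurrence:
  with phi(l) = -Im((1+i)^l) and A_k = sum_l binom(2k-l,k) phi(l)/l this amounts to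
  (k+1) A_(k+1) - (4k+2) A_k = -2^k. The left-hand side is a sum of phi against ballot numbers,
  and the recurrence of the ballot numbers, paired with phi(l+2) = 2 phi(l+1) - 2 phi(l),
  makes it double with each step in k.
\<close>

section \<open>The binomial sums in the coefficients\<close>

definition phi :: "nat \<Rightarrow> real" where
  "phi l = (-1)^l * 2 powr (real l / 2) * sin (3 * real l * pi / 4)"

lemma phi_eq_Im: "phi l = - Im ((1 + \<i>) ^ l)"
proof -
  have "1 + \<i> = complex_of_real (sqrt 2) * cis (pi/4)"
    by (simp add: cis.ctr cos_45 sin_45 complex_eq_iff)
  then have "(1 + \<i>) ^ l = complex_of_real (sqrt 2 ^ l) * cis (real l * (pi/4))"
    by (simp only: power_mult_distrib Complex.DeMoivre of_real_power)
  then have "Im ((1 + \<i>) ^ l) = sqrt 2 ^ l * sin (real l * pi / 4)"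
    by simp
  moreover have "sqrt 2 ^ l = (2::real) powr (real l / 2)"
    by (simp add: powr_half_sqrt[symmetric] powr_realpow[symmetric] powr_powr)
  moreover have "sin (3 * real l * pi / 4) = (-1)^Suc l * sin (real l * pi / 4)"
    using sin_diff[of "real l * pi" "real l * pi / 4"] by (simp add: sin_npi cos_npi field_simps)
  ultimately show ?thesis by (simp add: phi_def)
qed

lemma phi_0: "phi 0 = 0"
  by (simp add: phi_eq_Im)

lemma phi_1: "phi (Suc 0) = -1"
  by (simp add: phi_eq_Im)

lemma phi_Suc_Suc: "phi (Suc (Suc l)) = 2 * phi (Suc l) - 2 * phi l"
proof -
  have "(1 + \<i>) ^ Suc (Suc l) = 2 * (1 + \<i>) ^ Suc l - 2 * (1 + \<i>) ^ l"
    by (simp add: algebra_simps power2_eq_square)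
  then show ?thesis by (simp add: phi_eq_Im)
qed

definition ballot :: "nat \<Rightarrow> nat \<Rightarrow> real" where
  "ballot k j = (if j = 0 then (if k = 0 then 1 else 0) else
     if j \<le> k then real j * fact (2*k - j - 1) / (fact k * fact (k - j)) else 0)"

lemma ballot_eq:
  "0 < k \<Longrightarrow> j \<le> k \<Longrightarrow> ballot k j = real j * fact (2*k - j - 1) / (fact k * fact (k - j))"
  by (simp add: ballot_def)

lemma ballot_same [simp]: "ballot k k = 1"
  by (cases k) (simp_all add: ballot_def fact_Suc)

lemma ballot_0 [simp]: "0 < k \<Longrightarrow> ballot k 0 = 0"
  by (simp add: ballot_def)

lemma ballot_less [simp]: "k < j \<Longrightarrow> ballot k j = 0"
  by (simp add: ballot_def)

lemma ballot_Suc_diff: "ballot (Suc k) (Suc j) - ballot (Suc k) (Suc (Suc j)) = ballot k j"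
proof -
  consider "k < j" | "k = j" | m where "k = j + Suc m"
    using less_imp_Suc_add by (metis add_Suc_right linorder_neqE_nat)
  then show ?thesis
  proof cases
    case 3
    define F H M where "F = (fact (j + 1 + 2*m) :: real)" and "H = (fact (j + 1 + m) :: real)"
      and "M = (fact m :: real)"
    have b1: "ballot (Suc k) (Suc j)
        = real (Suc j) * ((2 + real j + 2*real m) * F) / ((2 + real j + real m) * H * ((1 + real m) * M))"
      by (simp add: ballot_eq F_def H_def M_def 3 algebra_simps)
    have b2: "ballot (Suc k) (Suc (Suc j)) = (2 + real j) * F / ((2 + real j + real m) * H * M)"
      by (simp add: ballot_eq F_def H_def M_def 3 algebra_simps)
    have b3: "ballot k j = real j * F / (H * ((1 + real m) * M))"
      by (simp add: ballot_eq F_def H_def M_def 3 algebra_simps)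
    have "2 + real j + real m > 0" "1 + real m > 0" "H > 0" "M > 0"
      by (simp_all add: H_def M_def add_pos_nonneg)
    then show ?thesis unfolding b1 b2 b3
      by (simp add: divide_simps) (simp add: algebra_simps)
  qed simp_all
qed

lemma ballot_eq_choose_diff:
  assumes "0 < l" "l \<le> k"
  shows "real l * ballot k (l - 1)
    = real (Suc k) * real ((2 * Suc k - l) choose Suc k) - real (4 * k + 2) * real ((2 * k - l) choose k)"
proof -
  obtain m where k: "k = l + m"
    using assms le_Suc_ex by blast
  define F H M where "F = (fact (l + 2*m) :: real)" and "H = (fact (l + m) :: real)"
    and "M = (fact m :: real)"
  have c1: "real ((2 * k - l) choose k) = F / (H * M)"
    using binomial_fact[of "l + m" "l + 2*m", where 'a=real] by (simp add: k F_def H_def M_def mult_2)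
  have c2: "real ((2 * Suc k - l) choose Suc k)
      = (2 + real l + 2 * real m) * ((1 + real l + 2 * real m) * F)
        / ((1 + real l + real m) * H * ((1 + real m) * M))"
    using binomial_fact[of "Suc (l + m)" "Suc (Suc (l + 2*m))", where 'a=real]
    by (simp add: k F_def H_def M_def algebra_simps)
  have b: "ballot k (l - 1) = (real l - 1) * F / (H * ((1 + real m) * M))"
    using assms by (simp add: ballot_eq k F_def H_def M_def Suc_diff_le algebra_simps)
  have "1 + real l + real m > 0" "1 + real m > 0" "H > 0" "M > 0"
    by (simp_all add: H_def M_def add_pos_nonneg)
  then show ?thesis unfolding c1 c2 b
    by (simp add: k divide_simps) (simp add: algebra_simps)
qed

lemma sum_ballot_phi: "(\<Sum>j\<le>k. ballot k j * phi (Suc j)) = - (2 ^ k)"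
proof (induction k)
  case 0
  show ?case by (simp add: phi_1)
next
  case (Suc k)
  let ?b = "ballot (Suc k)"
  have shift: "(\<Sum>j\<le>k. ?b (Suc j) * phi j) = (\<Sum>j\<le>k. ?b (Suc (Suc j)) * phi (Suc j))"
  proof -
    have "(\<Sum>j\<le>k. ?b (Suc j) * phi j) = (\<Sum>j\<le>Suc k. ?b (Suc j) * phi j)"
      by simp
    also have "\<dots> = (\<Sum>j\<le>k. ?b (Suc (Suc j)) * phi (Suc j))"
      by (simp only: sum.atMost_Suc_shift) (simp add: phi_0)
    finally show ?thesis .
  qed
  have "(\<Sum>j\<le>Suc k. ?b j * phi (Suc j)) = (\<Sum>j\<le>k. ?b (Suc j) * phi (Suc (Suc j)))"
    by (simp only: sum.atMost_Suc_shift) simp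
  also have "\<dots> = 2 * (\<Sum>j\<le>k. ?b (Suc j) * phi (Suc j)) - 2 * (\<Sum>j\<le>k. ?b (Suc j) * phi j)"
    by (simp add: phi_Suc_Suc sum_distrib_left sum_subtractf algebra_simps)
  also have "\<dots> = 2 * (\<Sum>j\<le>k. (?b (Suc j) - ?b (Suc (Suc j))) * phi (Suc j))"
    unfolding shift by (simp add: sum_subtractf left_diff_distrib)
  also have "\<dots> = - (2 ^ Suc k)"
    by (simp add: ballot_Suc_diff Suc.IH)
  finally show ?case .
qed

definition binom_phi_sum :: "nat \<Rightarrow> real" where
  "binom_phi_sum k = (\<Sum>l=1..k. real ((2 * k - l) choose k) * (phi l / real l))"

lemma binom_phi_sum_Suc:
  "real (Suc k) * binom_phi_sum (Suc k) = real (4 * k + 2) * binom_phi_sum k - 2 ^ k"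
proof -
  have "real (Suc k) * binom_phi_sum (Suc k) - real (4 * k + 2) * binom_phi_sum k
      = (\<Sum>l=1..k. (real (Suc k) * real ((2 * Suc k - l) choose Suc k)
           - real (4 * k + 2) * real ((2 * k - l) choose k)) * (phi l / real l)) + phi (Suc k)"
    by (simp add: binom_phi_sum_def sum_distrib_left sum_subtractf algebra_simps del: of_nat_Suc)
  also have "\<dots> = (\<Sum>l=1..k. ballot k (l - 1) * phi l) + ballot k k * phi (Suc k)"
  proof -
    have "(real (Suc k) * real ((2 * Suc k - l) choose Suc k)
          - real (4 * k + 2) * real ((2 * k - l) choose k)) * (phi l / real l)
        = ballot k (l - 1) * phi l" if "l \<in> {1..k}" for l
      using that by (subst ballot_eq_choose_diff[symmetric]) auto
    then show ?thesis
      by simp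
  qed
  also have "\<dots> = (\<Sum>j\<le>k. ballot k j * phi (Suc j))"
    by (simp add: sum.atLeast1_atMost_eq lessThan_Suc_atMost[symmetric])
  finally show ?thesis
    by (simp add: sum_ballot_phi)
qed

definition taylor_bracket :: "nat \<Rightarrow> real" where
  "taylor_bracket k = pi / 4 * real (oddfact k) + fact k / 2 ^ k * binom_phi_sum k"

lemma oddfact_Suc: "oddfact (Suc k) = (2 * k + 1) * oddfact k"
  by (simp add: oddfact_def)

lemma taylor_bracket_0: "taylor_bracket 0 = pi / 4"
  by (simp add: taylor_bracket_def oddfact_def binom_phi_sum_def)

lemma taylor_bracket_Suc: "taylor_bracket (Suc k) = (2 * k + 1) * taylor_bracket k - fact k / 2"
proof -
  have "fact (Suc k) / 2 ^ Suc k * binom_phi_sum (Suc k)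
      = fact k / 2 ^ Suc k * (real (Suc k) * binom_phi_sum (Suc k))"
    by (simp add: algebra_simps)
  also have "\<dots> = (2 * k + 1) * (fact k / 2 ^ k * binom_phi_sum k) - fact k / 2"
    unfolding binom_phi_sum_Suc by (simp add: field_simps)
  finally have eq: "fact (Suc k) / 2 ^ Suc k * binom_phi_sum (Suc k)
      = (2 * k + 1) * (fact k / 2 ^ k * binom_phi_sum k) - fact k / 2" .
  show ?thesis
    unfolding taylor_bracket_def oddfact_Suc eq by (simp add: algebra_simps)
qed

lemma Wcoeff_eq: "Wcoeff n = (-1) ^ n * (\<Sum>k\<le>n. (-1) ^ k * real (Stirling n k) * taylor_bracket k)"
proof -
  have "(\<Sum>l=1..k. (-1) ^ l * real ((2 * k - l) choose k) * (2 powr (real l / 2) / real l)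
           * sin (3 * real l * pi / 4)) = binom_phi_sum k" for k
    unfolding binom_phi_sum_def phi_def by (rule sum.cong) simp_all
  moreover have "(\<Sum>k=1..n. f k) = (\<Sum>k\<le>n. f k)" if "f 0 = 0" for f :: "nat \<Rightarrow> real"
    using that by (simp add: atMost_atLeast0 sum.atLeast_Suc_atMost)
  ultimately show ?thesis
    by (simp add: Wcoeff_def taylor_bracket_def binom_phi_sum_def atMost_atLeast0
        sum_distrib_left sum.distrib algebra_simps)
qed

section \<open>Higher derivatives\<close>

lemma open_exp_vimage: "open (S :: complex set) \<Longrightarrow> open (exp -` S)"
  by (erule continuous_open_vimage) (intro continuous_intros)

lemma sum_Stirling_Suc:
  fixes X :: "nat \<Rightarrow> 'a :: comm_semiring_1"
  shows "(\<Sum>k\<le>Suc n. of_nat (Stirling (Suc n) k) * X k)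
       = (\<Sum>k\<le>n. of_nat (Stirling n k) * (of_nat k * X k + X (Suc k)))"
proof -
  have "(\<Sum>k\<le>Suc n. of_nat (Stirling (Suc n) k) * X k)
      = (\<Sum>k\<le>n. of_nat (Suc k * Stirling n (Suc k)) * X (Suc k))
        + (\<Sum>k\<le>n. of_nat (Stirling n k) * X (Suc k))"
    by (simp only: sum.atMost_Suc_shift) (simp add: sum.distrib algebra_simps)
  also have "(\<Sum>k\<le>n. of_nat (Suc k * Stirling n (Suc k)) * X (Suc k))
      = (\<Sum>k\<le>n. of_nat (k * Stirling n k) * X k)"
  proof -
    have "(\<Sum>k\<le>n. of_nat (k * Stirling n k) * X k) = (\<Sum>k\<le>Suc n. of_nat (k * Stirling n k) * X k)"
      by simp
    also have "\<dots> = (\<Sum>k\<le>n. of_nat (Suc k * Stirling n (Suc k)) * X (Suc k))"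
      by (simp only: sum.atMost_Suc_shift) simp
    finally show ?thesis ..
  qed
  finally show ?thesis
    by (simp add: sum.distrib algebra_simps)
qed

lemma higher_deriv_has_field_derivative:
  assumes "f holomorphic_on S" "open S" "x \<in> S"
  shows "((deriv ^^ k) f has_field_derivative (deriv ^^ Suc k) f x) (at x)"
  using holomorphic_derivI[OF holomorphic_higher_deriv[OF assms(1,2)] assms(2,3)] by simp

lemma higher_deriv_compose_exp:
  assumes f: "f holomorphic_on S" and S: "open S" and z: "exp z \<in> S"
  shows "(deriv ^^ n) (\<lambda>w. f (exp w)) z
    = (\<Sum>k\<le>n. of_nat (Stirling n k) * (exp z ^ k * (deriv ^^ k) f (exp z)))"
proof -
  define T where "T = exp -` S"
  have T: "open T"
    unfolding T_def using S by (rule open_exp_vimage)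
  have "\<forall>z\<in>T. (deriv ^^ n) (\<lambda>w. f (exp w)) z
    = (\<Sum>k\<le>n. of_nat (Stirling n k) * (exp z ^ k * (deriv ^^ k) f (exp z)))"
  proof (induction n)
    case 0
    show ?case by simp
  next
    case (Suc n)
    show ?case
    proof
      fix z assume "z \<in> T"
      define X where "X k = exp z ^ k * (deriv ^^ k) f (exp z)" for k
      have "((\<lambda>z. exp z ^ k * (deriv ^^ k) f (exp z)) has_field_derivative of_nat k * X k + X (Suc k)) (at z)" for k
      proof -
        have "((deriv ^^ k) f has_field_derivative (deriv ^^ Suc k) f (exp z)) (at (exp z))"
          using \<open>z \<in> T\<close> by (intro higher_deriv_has_field_derivative[OF f S]) (simp add: T_def)
        from DERIV_chain2[OF this DERIV_exp]
        have chain: "((\<lambda>z. (deriv ^^ k) f (exp z)) has_field_derivative exp z * (deriv ^^ Suc k) f (exp z)) (at z)"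
          by (simp add: mult.commute)
        have power: "((\<lambda>z. exp z ^ k) has_field_derivative of_nat k * exp z ^ k) (at z)"
        proof -
          have "exp z * exp z ^ (k - Suc 0) = exp z ^ k" if "k > 0"
            using that by (simp add: power_Suc[symmetric])
          then show ?thesis
            using DERIV_power[where n=k, OF DERIV_exp[of z]] by (cases "k = 0") simp_all
        qed
        from DERIV_mult[OF power chain] show ?thesis
          by (simp add: X_def algebra_simps)
      qed
      then have "((\<lambda>z. \<Sum>k\<le>n. of_nat (Stirling n k) * (exp z ^ k * (deriv ^^ k) f (exp z)))
          has_field_derivative (\<Sum>k\<le>n. of_nat (Stirling n k) * (of_nat k * X k + X (Suc k)))) (at z)"
        by (intro DERIV_sum DERIV_cmult)
      then have "((deriv ^^ n) (\<lambda>w. f (exp w)) has_field_derivative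
          (\<Sum>k\<le>n. of_nat (Stirling n k) * (of_nat k * X k + X (Suc k)))) (at z)"
        by (rule has_field_derivative_transform_within_open[OF _ T \<open>z \<in> T\<close>]) (use Suc.IH in simp)
      then show "(deriv ^^ Suc n) (\<lambda>w. f (exp w)) z
          = (\<Sum>k\<le>Suc n. of_nat (Stirling (Suc n) k) * (exp z ^ k * (deriv ^^ k) f (exp z)))"
        unfolding sum_Stirling_Suc by (simp add: DERIV_imp_deriv X_def)
    qed
  qed
  then show ?thesis
    using z by (simp add: T_def)
qed


lemma higher_deriv_ode_solution:
  assumes f: "f holomorphic_on S" and S: "open S"
    and ode: "\<And>x. x \<in> S \<Longrightarrow> 2 * x * ((2 * x - 1) * deriv f x + f x) = 1"
    and x: "x \<in> S"
  shows "2 * x ^ Suc k * ((2 * x - 1) * (deriv ^^ Suc k) f x + of_nat (2 * k + 1) * (deriv ^^ k) f x)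
    = (-1) ^ k * fact k"
  using x
proof (induction k arbitrary: x)
  case 0
  then show ?case using ode by simp
next
  case (Suc k)
  txt \<open>With Q_k = 2 x^(k+1) P_k one has x Q_k' = (k+1) Q_k + Q_(k+1), and Q_k is constant.\<close>
  define P where "P k x = (2 * x - 1) * (deriv ^^ Suc k) f x + of_nat (2 * k + 1) * (deriv ^^ k) f x" for k x
  have P': "(P k has_field_derivative P (Suc k) x) (at x)"
    using higher_deriv_has_field_derivative[OF f S Suc.prems, of k]
      higher_deriv_has_field_derivative[OF f S Suc.prems, of "Suc k"]
    unfolding P_def by (auto intro!: derivative_eq_intros simp: algebra_simps)
  have "((\<lambda>x. 2 * x ^ Suc k * P k x) has_field_derivative
      2 * (of_nat (Suc k) * x ^ k) * P k x + 2 * x ^ Suc k * P (Suc k) x) (at x)"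
    using DERIV_mult[OF DERIV_cmult[OF DERIV_power[where n="Suc k", OF DERIV_ident]] P', of 2]
    by (simp add: mult.commute)
  moreover have "((\<lambda>x. 2 * x ^ Suc k * P k x) has_field_derivative 0) (at x)"
  proof -
    have "eventually (\<lambda>y. 2 * y ^ Suc k * P k y = (-1) ^ k * fact k) (nhds x)"
      using eventually_nhds_in_open[OF S Suc.prems] by eventually_elim (unfold P_def, rule Suc.IH)
    then show ?thesis
      by (subst DERIV_cong_ev[OF refl _ refl]) (auto intro: DERIV_const)
  qed
  ultimately have "0 = x * (2 * (of_nat (Suc k) * x ^ k) * P k x + 2 * x ^ Suc k * P (Suc k) x)"
    using DERIV_unique by fastforce
  also have "\<dots> = of_nat (Suc k) * (2 * x ^ Suc k * P k x) + 2 * x ^ Suc (Suc k) * P (Suc k) x"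
    by (simp add: algebra_simps)
  finally have "2 * x ^ Suc (Suc k) * P (Suc k) x = - (of_nat (Suc k) * (2 * x ^ Suc k * P k x))"
    by (metis add_eq_0_iff)
  also have "2 * x ^ Suc k * P k x = (-1) ^ k * fact k"
    unfolding P_def by (rule Suc.IH[OF Suc.prems])
  finally show ?case
    unfolding P_def by simp
qed

section \<open>The function g\<close>

lemma Re_csqrt_pos: "z \<notin> \<real>\<^sub>\<le>\<^sub>0 \<Longrightarrow> 0 < Re (csqrt z)"
proof (rule ccontr)
  assume z: "z \<notin> \<real>\<^sub>\<le>\<^sub>0" and "\<not> 0 < Re (csqrt z)"
  define b where "b = Im (csqrt z)"
  have "csqrt z = \<i> * of_real b"
    using csqrt_principal[of z] \<open>\<not> 0 < Re (csqrt z)\<close> by (simp add: complex_eq_iff b_def)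
  then have "z = - of_real (b ^ 2)"
    by (metis power2_csqrt power_mult_distrib power2_i mult_minus1 of_real_power)
  with z show False
    by (simp add: complex_nonpos_Reals_iff)
qed

definition g :: "complex \<Rightarrow> complex" where
  "g x = Arctan (csqrt (2 * x - 1)) / csqrt (2 * x - 1)"

definition g_domain :: "complex set" where
  "g_domain = {x. 2 * x - 1 \<notin> \<real>\<^sub>\<le>\<^sub>0}"

lemma open_g_domain: "open g_domain"
proof -
  have "g_domain = (\<lambda>x. 2 * x - 1) -` (- \<real>\<^sub>\<le>\<^sub>0)"
    by (auto simp: g_domain_def)
  moreover have "open ((\<lambda>x. 2 * x - 1) -` (- \<real>\<^sub>\<le>\<^sub>0 :: complex set))"
    by (rule continuous_open_vimage) (auto intro!: continuous_intros open_Compl)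
  ultimately show ?thesis
    by simp
qed

lemma g_domain_nonzero:
  assumes "x \<in> g_domain"
  shows "x \<noteq> 0" "2 * x - 1 \<noteq> 0"
proof -
  show "x \<noteq> 0"
    using assms by (auto simp: g_domain_def)
  show "2 * x - 1 \<noteq> 0"
    using assms nonpos_Reals_zero_I unfolding g_domain_def by force
qed

lemma g_has_field_derivative:
  assumes x: "x \<in> g_domain"
  shows "(g has_field_derivative (1 / (2 * x) - g x) / (2 * x - 1)) (at x)"
proof -
  define v where "v = csqrt (2 * x - 1)"
  have nonpos: "2 * x - 1 \<notin> \<real>\<^sub>\<le>\<^sub>0"
    using x by (simp add: g_domain_def)
  then have "0 < Re v"
    unfolding v_def by (rule Re_csqrt_pos)
  then have v: "v \<noteq> 0" "Re v \<noteq> 0"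
    by auto
  have v2: "v ^ 2 = 2 * x - 1"
    by (simp add: v_def)
  have "(g has_field_derivative (inverse (1 + v ^ 2) * (1 / v) * v - Arctan v * (1 / v)) / (v * v)) (at x)"
    unfolding g_def[abs_def] v_def using nonpos v
    by (auto intro!: derivative_eq_intros simp: v_def)
  moreover have "(inverse (1 + v ^ 2) * (1 / v) * v - Arctan v * (1 / v)) / (v * v)
      = (1 / (1 + v ^ 2) - Arctan v / v) / v ^ 2"
    using v by (simp add: power2_eq_square inverse_eq_divide)
  moreover have "g x = Arctan v / v"
    by (simp add: g_def v_def)
  ultimately show ?thesis
    by (simp add: v2)
qed

lemma g_holomorphic: "g holomorphic_on g_domain"
  using g_has_field_derivative
  by (auto simp: holomorphic_on_def field_differentiable_def intro: has_field_derivative_at_within)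

lemma g_ode: "x \<in> g_domain \<Longrightarrow> 2 * x * ((2 * x - 1) * deriv g x + g x) = 1"
proof -
  assume x: "x \<in> g_domain"
  with g_domain_nonzero DERIV_imp_deriv[OF g_has_field_derivative[OF x]] show ?thesis
    by (simp add: field_simps)
qed

lemma higher_deriv_g_1: "(deriv ^^ k) g 1 = of_real ((-1) ^ k * taylor_bracket k)"
proof (induction k)
  case 0
  show ?case
    using Arctan_of_real[of 1] by (simp add: g_def taylor_bracket_0 arctan_one)
next
  case (Suc k)
  have "1 \<in> g_domain"
    by (simp add: g_domain_def complex_nonpos_Reals_iff)
  from higher_deriv_ode_solution[OF g_holomorphic open_g_domain g_ode this, of k]
  have "(deriv ^^ Suc k) g 1 = (-1) ^ k * fact k / 2 - of_nat (2 * k + 1) * (deriv ^^ k) g 1"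
    by (simp add: field_simps)
  then show ?case
    by (simp add: Suc.IH taylor_bracket_Suc field_simps)
qed

lemma exp_in_g_domain:
  assumes "norm z < ln 2"
  shows "exp z \<in> g_domain"
proof (rule ccontr)
  assume "exp z \<notin> g_domain"
  then have real: "Im (exp z) = 0" and "Re (exp z) \<le> 1 / 2"
    by (auto simp: g_domain_def complex_nonpos_Reals_iff)
  moreover have "1 / 2 < norm (exp z)"
  proof -
    have "- ln 2 < Re z"
      using abs_Re_le_cmod[of z] assms by linarith
    then have "exp (- ln 2) < exp (Re z)"
      by simp
    then show ?thesis
      by (simp add: norm_exp_eq_Re exp_minus)
  qed
  ultimately have "Re (exp z) < 0"
    using cmod_eq_Re[OF real] by linarith
  then have "cos (Im z) < 0"
    by (simp add: Re_exp mult_less_0_iff)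
  moreover have "\<bar>Im z\<bar> < pi / 2"
    using abs_Im_le_cmod[of z] assms ln_2_less_1 pi_gt3 by linarith
  then have "cos (Im z) > 0"
    by (intro cos_gt_zero_pi) linarith+
  ultimately show False
    by simp
qed

text \<open>Stated with \<open>-1 * z\<close> rather than \<open>-z\<close> to fit the pattern of higher_deriv_compose_linear.\<close>
lemma W_eq_g_exp: "W = (\<lambda>z. g (exp (-1 * z)))"
  by (simp add: W_def g_def fun_eq_iff)

lemma g_exp_holomorphic: "(\<lambda>w. g (exp w)) holomorphic_on exp -` g_domain"
  using holomorphic_on_compose[OF holomorphic_on_exp holomorphic_on_subset[OF g_holomorphic]]
  by (auto simp: o_def)

lemma W_holomorphic: "W holomorphic_on ball 0 (ln 2)"
proof -
  have "(\<lambda>z. -1 * z) ` ball 0 (ln 2) \<subseteq> exp -` g_domain"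
    by (auto intro!: exp_in_g_domain)
  from holomorphic_on_compose_gen[OF _ g_exp_holomorphic this] show ?thesis
    unfolding W_eq_g_exp by (simp add: o_def holomorphic_intros)
qed

lemma higher_deriv_W_0: "(deriv ^^ n) W 0 = of_real (Wcoeff n)"
proof -
  have "(deriv ^^ n) W 0 = (-1) ^ n * (deriv ^^ n) (\<lambda>w. g (exp w)) (-1 * 0)"
    unfolding W_eq_g_exp
    by (rule higher_deriv_compose_linear[where f="\<lambda>w. g (exp w)",
          OF g_exp_holomorphic open_ball[of 0 "ln 2"] open_exp_vimage[OF open_g_domain]])
       (auto intro: exp_in_g_domain)
  also have "\<dots> = (-1) ^ n * (\<Sum>k\<le>n. of_nat (Stirling n k) * (deriv ^^ k) g 1)"
    using higher_deriv_compose_exp[OF g_holomorphic open_g_domain, of 0] exp_in_g_domain[of 0]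
    by simp
  also have "\<dots> = of_real (Wcoeff n)"
    by (simp add: Wcoeff_eq higher_deriv_g_1 algebra_simps)
  finally show ?thesis .
qed

theorem theorem4p2:
  fixes z :: complex
  assumes "norm z < ln 2"
  shows "(\<lambda>n. complex_of_real (Wcoeff n) * z ^ n / fact n) sums W z"
  using holomorphic_power_series[OF W_holomorphic, of z] assms
  by (simp add: higher_deriv_W_0 algebra_simps)

end
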